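(* For $\kappa>0$ and $0\le\rho<1$ define $$C_s^{\lim}(\kappa,\rho)=\log(1+\kappa)+\log\!\left(\frac12+\sqrt{\frac14-\frac{\rho\kappa}{(1+\kappa)^2}}\right).$$ Then for all such $\kappa$ and $\rho$, $$(1-\rho)\,C_s^{\lim}(\kappa,0)\le C_s^{\lim}(\kappa,\rho)\le C_s^{\lim}(\kappa,0).$$
   Context: $C_s^{\lim}(\kappa,\rho)$ is the high-SNR limit of the ergodic secrecy capacity of a correlated Rayleigh fading wiretap channel with average channel gain ratio $\kappa=\mathbb{E}[H_M]/\mathbb{E}[H_E]$ and power correlation coefficient $\rho$ between the main and eavesdropper channel power gains; note $C_s^{\lim}(\kappa,0)=\log(1+\kappa)$. *)

theory Defs
  imports Complex_Main
begin

definition Cs_lim :: "real \<Rightarrow> real \<Rightarrow> real" where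
  "Cs_lim \<kappa> \<rho> = ln (1 + \<kappa>) + ln (1/2 + sqrt (1/4 - \<rho> * \<kappa> / (1 + \<kappa>)^2))"

end

theory Submission
  imports Defs "HOL-Analysis.Analysis"
begin

text \<open>Write \<open>a = \<kappa>/(1+\<kappa>)\<^sup>2 \<le> 1/4\<close> and \<open>g c = ln (1/2 + sqrt (1/4 - c))\<close>, so that
  \<open>Cs_lim \<kappa> \<rho> = ln (1+\<kappa>) + g (\<rho> a)\<close> and \<open>g 0 = 0\<close>. The upper bound is \<open>g \<le> 0\<close>.
  For the lower bound, \<open>g\<close> is concave (an increasing concave function of a concave one),
  hence \<open>g (\<rho> a) \<ge> \<rho> g a\<close>; and \<open>g a = ln (max 1 \<kappa> / (1+\<kappa>)) \<ge> - ln (1+\<kappa>)\<close>.\<close>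

lemma concave_on_sqrt: "concave_on {0..} sqrt"
proof (rule concave_on_linorderI)
  fix t x y :: real
  assume t: "0 < t" "t < 1" and xy: "x \<in> {0..}" "y \<in> {0..}"
  have gm: "sqrt x * sqrt y \<le> (x + y) / 2"
    using xy arith_geo_mean_sqrt[of x y] by (simp add: real_sqrt_mult)
  have "((1 - t) * sqrt x + t * sqrt y)\<^sup>2
      = (1 - t)\<^sup>2 * x + t\<^sup>2 * y + 2 * t * (1 - t) * (sqrt x * sqrt y)"
    using xy by (simp add: power2_eq_square algebra_simps)
  also have "\<dots> \<le> (1 - t)\<^sup>2 * x + t\<^sup>2 * y + 2 * t * (1 - t) * ((x + y) / 2)"
    using gm t by (intro add_left_mono mult_left_mono) auto
  also have "\<dots> = (1 - t) * x + t * y"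
    by (simp add: power2_eq_square field_simps)
  finally show "(1 - t) * sqrt x + t * sqrt y \<le> sqrt ((1 - t) *\<^sub>R x + t *\<^sub>R y)"
    by (simp add: real_le_rsqrt)
qed simp

lemma ln_half_plus_sqrt_scale:
  fixes c t :: real
  assumes c: "0 \<le> c" "c \<le> 1/4" and t: "0 \<le> t" "t \<le> 1"
  shows "t * ln (1/2 + sqrt (1/4 - c)) \<le> ln (1/2 + sqrt (1/4 - t * c))"
proof -
  define m where "m = 1/2 + sqrt (1/4 - c)"
  have m_pos: "0 < m"
    unfolding m_def using c by (intro add_pos_nonneg) simp_all
  have sqrt_quarter: "sqrt (1/4) = (1/2 :: real)"
    by (simp add: real_sqrt_divide)
  have "t * ln m \<le> ln ((1 - t) * 1 + t * m)"
    using concave_onD[OF ln_concave, of t 1 m] t m_pos by simp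
  also have "\<dots> \<le> ln (1/2 + sqrt (1/4 - t * c))"
  proof (rule ln_mono)
    have "(1 - t) * sqrt (1/4) + t * sqrt (1/4 - c) \<le> sqrt ((1 - t) * (1/4) + t * (1/4 - c))"
      using concave_onD[OF concave_on_sqrt, of t "1/4" "1/4 - c"] t c by simp
    also have "(1 - t) * (1/4) + t * (1/4 - c) = 1/4 - t * c"
      by (simp add: field_simps)
    finally have "(1 - t) * (1/2) + t * sqrt (1/4 - c) \<le> sqrt (1/4 - t * c)"
      unfolding sqrt_quarter .
    then show "(1 - t) * 1 + t * m \<le> 1/2 + sqrt (1/4 - t * c)"
      unfolding m_def by (simp add: field_simps)
    show "0 < (1 - t) * 1 + t * m"
      using t m_pos by (cases "t = 0") (auto intro: add_nonneg_pos)
  qed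
  finally show ?thesis
    unfolding m_def .
qed

lemma gain_le_quarter:
  fixes \<kappa> :: real
  assumes "0 \<le> \<kappa>"
  shows "\<kappa> / (1 + \<kappa>)\<^sup>2 \<le> 1/4"
proof -
  have "4 * \<kappa> \<le> (1 + \<kappa>)\<^sup>2"
    using zero_le_power2[of "1 - \<kappa>"] by (simp add: power2_eq_square algebra_simps)
  then show ?thesis
    using assms by (simp add: divide_simps)
qed

lemma sqrt_quarter_minus_gain:
  fixes \<kappa> :: real
  assumes "0 \<le> \<kappa>"
  shows "sqrt (1/4 - \<kappa> / (1 + \<kappa>)\<^sup>2) = \<bar>1 - \<kappa>\<bar> / (2 * (1 + \<kappa>))"
proof -
  have "1/4 - \<kappa> / (1 + \<kappa>)\<^sup>2 = ((1 - \<kappa>) / (2 * (1 + \<kappa>)))\<^sup>2"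
    using assms by (simp add: divide_simps) (simp add: power2_eq_square algebra_simps)
  then show ?thesis
    using assms by (simp add: abs_divide)
qed

lemma ln_half_plus_sqrt_gain_ge:
  fixes \<kappa> :: real
  assumes "0 \<le> \<kappa>"
  shows "- ln (1 + \<kappa>) \<le> ln (1/2 + sqrt (1/4 - \<kappa> / (1 + \<kappa>)\<^sup>2))"
proof -
  have "1 / (1 + \<kappa>) - 1/2 = (1 - \<kappa>) / (2 * (1 + \<kappa>))"
    using assms by (simp add: field_simps)
  also have "\<dots> \<le> \<bar>1 - \<kappa>\<bar> / (2 * (1 + \<kappa>))"
    using assms by (intro divide_right_mono) auto
  finally have "1 / (1 + \<kappa>) - 1/2 \<le> \<bar>1 - \<kappa>\<bar> / (2 * (1 + \<kappa>))" .
  then have "1 / (1 + \<kappa>) \<le> 1/2 + sqrt (1/4 - \<kappa> / (1 + \<kappa>)\<^sup>2)"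
    using assms by (simp add: sqrt_quarter_minus_gain)
  then have "ln (1 / (1 + \<kappa>)) \<le> ln (1/2 + sqrt (1/4 - \<kappa> / (1 + \<kappa>)\<^sup>2))"
    using assms by (intro ln_mono) auto
  then show ?thesis
    using assms by (simp add: ln_div)
qed

lemma Cs_lim_uncorrelated:
  "Cs_lim \<kappa> 0 = ln (1 + \<kappa>)"
  by (simp add: Cs_lim_def real_sqrt_divide)

theorem corollary1:
  fixes \<kappa> \<rho> :: real
  assumes "\<kappa> > 0" and "0 \<le> \<rho>" and "\<rho> < 1"
  shows "(1 - \<rho>) * Cs_lim \<kappa> 0 \<le> Cs_lim \<kappa> \<rho> \<and> Cs_lim \<kappa> \<rho> \<le> Cs_lim \<kappa> 0"
proof
  define a where "a = \<kappa> / (1 + \<kappa>)\<^sup>2"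
  define g where "g c = ln (1/2 + sqrt (1/4 - c))" for c :: real
  have a: "0 \<le> a" "a \<le> 1/4"
    using assms gain_le_quarter[of \<kappa>] by (simp_all add: a_def)
  then have \<rho>a: "0 \<le> \<rho> * a" "\<rho> * a \<le> 1/4"
    using assms mult_left_le_one_le[of a \<rho>] by simp_all
  have Cs: "Cs_lim \<kappa> \<rho> = ln (1 + \<kappa>) + g (\<rho> * a)"
    by (simp add: Cs_lim_def g_def a_def)
  have "\<rho> * - ln (1 + \<kappa>) \<le> \<rho> * g a"
    using assms ln_half_plus_sqrt_gain_ge[of \<kappa>] by (intro mult_left_mono) (simp_all add: g_def a_def)
  also have "\<dots> \<le> g (\<rho> * a)"
    unfolding g_def using a assms by (intro ln_half_plus_sqrt_scale) simp_all
  finally show "(1 - \<rho>) * Cs_lim \<kappa> 0 \<le> Cs_lim \<kappa> \<rho>"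
    by (simp add: Cs Cs_lim_uncorrelated algebra_simps)
  have "g (\<rho> * a) \<le> 0"
  proof -
    have "sqrt (1/4 - \<rho> * a) \<le> sqrt (1/4)"
      using \<rho>a by (intro real_sqrt_le_mono) simp
    then show ?thesis
      unfolding g_def using \<rho>a by (simp add: add_pos_nonneg real_sqrt_divide)
  qed
  then show "Cs_lim \<kappa> \<rho> \<le> Cs_lim \<kappa> 0"
    by (simp add: Cs Cs_lim_uncorrelated)
qed

end
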